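(* Let $(L,\preceq)$ be a lattice and $\delta$ a local congruence on $L$. Then the relation $\preceq_\delta$ on $L/\delta$ is a partial order if and only if every $\delta$-cycle in $L$ is closed.
   Context: For an equivalence relation $\delta$ on $L$, $[a]_\delta$ is the class of $a$ and $L/\delta$ the set of classes. A local congruence on a lattice $(L,\preceq)$ is an equivalence relation each of whose classes is a sublattice of $L$ and is convex (if $u,v$ are in the class and $u\preceq w\preceq v$, then $w$ is in the class). A $\delta$-sequence from $p_0$ to $p_n$ is a finite sequence $(p_0,p_1,\dots,p_n)$ of elements of $L$ with $n\ge1$ such that for each $i\in\{1,\dots,n\}$ either $(p_{i-1},p_i)\in\delta$ or $p_{i-1}\preceq p_i$. A $\delta$-cycle is a $\delta$-sequence $(p_0,\dots,p_n)$ with $p_0=p_n$; it is closed if $[p_0]_\delta=[p_1]_\delta=\dots=[p_n]_\delta$. The relation $\preceq_\delta$ on $L/\delta$ is defined by $[x]_\delta\preceq_\delta[y]_\delta$ iff there exists a $\delta$-sequence from some $x'\in[x]_\delta$ to some $y'\in[y]_\delta$ (it is always a preorder). *)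

theory Defs
  imports Main
begin

text \<open>The lattice (L, \<preceq>) is the carrier type 'a of class lattice (L = UNIV, \<preceq> = \<le>).\<close>

definition local_congruence :: "('a::lattice) rel \<Rightarrow> bool" where
  "local_congruence \<delta> \<longleftrightarrow> equiv UNIV \<delta> \<and>
     (\<forall>C \<in> UNIV // \<delta>.
        (\<forall>x\<in>C. \<forall>y\<in>C. inf x y \<in> C \<and> sup x y \<in> C) \<and>
        (\<forall>u\<in>C. \<forall>v\<in>C. \<forall>w. u \<le> w \<and> w \<le> v \<longrightarrow> w \<in> C))"

definition delta_seq :: "('a::order) rel \<Rightarrow> (nat \<Rightarrow> 'a) \<Rightarrow> nat \<Rightarrow> bool" where
  "delta_seq \<delta> p n \<longleftrightarrow> 1 \<le> n \<and>
     (\<forall>i\<in>{1..n}. (p (i - 1), p i) \<in> \<delta> \<or> p (i - 1) \<le> p i)"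

definition delta_cycle :: "('a::order) rel \<Rightarrow> (nat \<Rightarrow> 'a) \<Rightarrow> nat \<Rightarrow> bool" where
  "delta_cycle \<delta> p n \<longleftrightarrow> delta_seq \<delta> p n \<and> p 0 = p n"

definition closed_cycle :: "'a rel \<Rightarrow> (nat \<Rightarrow> 'a) \<Rightarrow> nat \<Rightarrow> bool" where
  "closed_cycle \<delta> p n \<longleftrightarrow> (\<forall>i\<in>{0..n}. \<delta> `` {p i} = \<delta> `` {p 0})"

definition quot_rel :: "('a::order) rel \<Rightarrow> 'a set rel" where
  "quot_rel \<delta> = {(X, Y). X \<in> UNIV // \<delta> \<and> Y \<in> UNIV // \<delta> \<and>
      (\<exists>p n. delta_seq \<delta> p n \<and> p 0 \<in> X \<and> p n \<in> Y)}"

end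

theory Submission
  imports Defs
begin

text \<open>A \<delta>-sequence is exactly a path of the relation \<open>\<delta> \<union> \<le>\<close>, so \<open>\<preceq>\<^sub>\<delta>\<close> is the image on
  classes of the reflexive transitive closure of that relation and therefore a preorder.
  It is antisymmetric iff mutually reachable elements are \<open>\<delta>\<close>-equivalent. Any two points
  of a \<open>\<delta>\<close>-cycle are mutually reachable, and conversely two mutually reachable points lie
  on a common \<open>\<delta>\<close>-cycle, obtained by concatenating the two connecting sequences; hence
  antisymmetry is the same as closedness of all \<open>\<delta>\<close>-cycles.\<close>

definition delta_step :: "('a::order) rel \<Rightarrow> 'a rel" where
  "delta_step \<delta> = \<delta> \<union> {(x, y). x \<le> y}"

lemma delta_seq_iff:
  "delta_seq \<delta> p n \<longleftrightarrow> 1 \<le> n \<and> (\<forall>i<n. (p i, p (Suc i)) \<in> delta_step \<delta>)"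
proof -
  have "(\<forall>i\<in>{1..n}. (p (i - 1), p i) \<in> delta_step \<delta>) \<longleftrightarrow>
        (\<forall>i<n. (p i, p (Suc i)) \<in> delta_step \<delta>)"
  proof (intro iffI allI impI ballI)
    fix i assume "\<forall>i\<in>{1..n}. (p (i - 1), p i) \<in> delta_step \<delta>" and "i < n"
    then show "(p i, p (Suc i)) \<in> delta_step \<delta>"
      by (metis One_nat_def Suc_leI atLeastAtMost_iff diff_Suc_1 le_simps(3) zero_less_Suc)
  next
    fix i assume "\<forall>i<n. (p i, p (Suc i)) \<in> delta_step \<delta>" and "i \<in> {1..n}"
    moreover have "Suc (i - 1) = i" "i - 1 < n"
      using \<open>i \<in> {1..n}\<close> by auto
    ultimately show "(p (i - 1), p i) \<in> delta_step \<delta>"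
      by metis
  qed
  then show ?thesis
    unfolding delta_seq_def delta_step_def by auto
qed

lemma delta_seq_append:
  assumes "delta_seq \<delta> p n" "delta_seq \<delta> q m" "p n = q 0"
  shows "delta_seq \<delta> (\<lambda>i. if i \<le> n then p i else q (i - n)) (n + m)" (is "delta_seq \<delta> ?c _")
  unfolding delta_seq_iff
proof (intro conjI allI impI)
  show "1 \<le> n + m"
    using assms(1) by (simp add: delta_seq_iff)
  fix i assume "i < n + m"
  show "(?c i, ?c (Suc i)) \<in> delta_step \<delta>"
  proof (cases "i < n")
    case True
    then show ?thesis
      using assms(1) by (simp add: delta_seq_iff)
  next
    case False
    then have "?c i = q (i - n)" "?c (Suc i) = q (Suc (i - n))"
      using assms(3) by (auto simp: Suc_diff_le)
    moreover have "i - n < m"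
      using \<open>i < n + m\<close> False by simp
    ultimately show ?thesis
      using assms(2) by (simp add: delta_seq_iff)
  qed
qed

lemma delta_seq_imp_rtrancl:
  assumes "delta_seq \<delta> p n" "i \<le> j" "j \<le> n"
  shows "(p i, p j) \<in> (delta_step \<delta>)\<^sup>*"
  using assms(2,3)
proof (induction j rule: dec_induct)
  case (step k)
  then have "(p k, p (Suc k)) \<in> delta_step \<delta>"
    using assms(1) by (simp add: delta_seq_iff)
  with step show ?case
    by (meson Suc_leD rtrancl.rtrancl_into_rtrancl)
qed simp

lemma rtrancl_delta_step_iff:
  "(x, y) \<in> (delta_step \<delta>)\<^sup>* \<longleftrightarrow> (\<exists>p n. delta_seq \<delta> p n \<and> p 0 = x \<and> p n = y)"
proof
  assume "(x, y) \<in> (delta_step \<delta>)\<^sup>*"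
  then obtain k f where f: "f 0 = x" "f k = y" "\<forall>i<k. (f i, f (Suc i)) \<in> delta_step \<delta>"
    by (auto simp: rtrancl_power relpow_fun_conv)
  show "\<exists>p n. delta_seq \<delta> p n \<and> p 0 = x \<and> p n = y"
  proof (cases "k = 0")
    case True
    then have "delta_seq \<delta> (\<lambda>_. x) 1 \<and> x = y"
      using f by (simp add: delta_seq_iff delta_step_def)
    then show ?thesis by blast
  next
    case False
    then have "delta_seq \<delta> f k"
      using f(3) by (simp add: delta_seq_iff)
    then show ?thesis
      using f(1,2) by blast
  qed
next
  assume "\<exists>p n. delta_seq \<delta> p n \<and> p 0 = x \<and> p n = y"
  then show "(x, y) \<in> (delta_step \<delta>)\<^sup>*"
    using delta_seq_imp_rtrancl by blast
qed

lemma quot_rel_classes_iff: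
  assumes "equiv UNIV \<delta>"
  shows "(\<delta> `` {x}, \<delta> `` {y}) \<in> quot_rel \<delta> \<longleftrightarrow> (x, y) \<in> (delta_step \<delta>)\<^sup>*"
proof
  assume "(\<delta> `` {x}, \<delta> `` {y}) \<in> quot_rel \<delta>"
  then obtain p n where p: "delta_seq \<delta> p n" "(x, p 0) \<in> \<delta>" "(y, p n) \<in> \<delta>"
    unfolding quot_rel_def by auto
  have "(x, p 0) \<in> (delta_step \<delta>)\<^sup>*" "(p n, y) \<in> (delta_step \<delta>)\<^sup>*"
    using p assms by (auto simp: delta_step_def equiv_def dest: symD)
  moreover have "(p 0, p n) \<in> (delta_step \<delta>)\<^sup>*"
    using delta_seq_imp_rtrancl[OF p(1)] by simp
  ultimately show "(x, y) \<in> (delta_step \<delta>)\<^sup>*"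
    by (meson rtrancl_trans)
next
  assume "(x, y) \<in> (delta_step \<delta>)\<^sup>*"
  moreover have "x \<in> \<delta> `` {x}" "y \<in> \<delta> `` {y}"
    using assms by (auto simp: equiv_def refl_on_def)
  ultimately show "(\<delta> `` {x}, \<delta> `` {y}) \<in> quot_rel \<delta>"
    unfolding quot_rel_def rtrancl_delta_step_iff by (auto intro: quotientI)
qed

lemma preorder_on_quot_rel:
  assumes "equiv UNIV \<delta>"
  shows "preorder_on (UNIV // \<delta>) (quot_rel \<delta>)"
  unfolding preorder_on_def
proof (intro conjI)
  show "quot_rel \<delta> \<subseteq> UNIV // \<delta> \<times> UNIV // \<delta>"
    unfolding quot_rel_def by auto
  show "refl_on (UNIV // \<delta>) (quot_rel \<delta>)"
    using quot_rel_classes_iff[OF assms] by (auto simp: refl_on_def elim!: quotientE)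
  show "trans (quot_rel \<delta>)"
  proof (rule transI)
    fix X Y Z assume XYZ: "(X, Y) \<in> quot_rel \<delta>" "(Y, Z) \<in> quot_rel \<delta>"
    then obtain x y z where "X = \<delta> `` {x}" "Y = \<delta> `` {y}" "Z = \<delta> `` {z}"
      unfolding quot_rel_def by (auto elim!: quotientE)
    with XYZ show "(X, Z) \<in> quot_rel \<delta>"
      using quot_rel_classes_iff[OF assms] by (meson rtrancl_trans)
  qed
qed

lemma antisym_quot_rel_iff:
  assumes "equiv UNIV \<delta>"
  shows "antisym (quot_rel \<delta>) \<longleftrightarrow>
    (\<forall>x y. (x, y) \<in> (delta_step \<delta>)\<^sup>* \<longrightarrow> (y, x) \<in> (delta_step \<delta>)\<^sup>* \<longrightarrow> \<delta> `` {x} = \<delta> `` {y})"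
proof (intro iffI allI impI)
  fix x y assume "antisym (quot_rel \<delta>)" "(x, y) \<in> (delta_step \<delta>)\<^sup>*" "(y, x) \<in> (delta_step \<delta>)\<^sup>*"
  then show "\<delta> `` {x} = \<delta> `` {y}"
    using quot_rel_classes_iff[OF assms] antisymD by metis
next
  assume mutual: "\<forall>x y. (x, y) \<in> (delta_step \<delta>)\<^sup>* \<longrightarrow> (y, x) \<in> (delta_step \<delta>)\<^sup>* \<longrightarrow>
      \<delta> `` {x} = \<delta> `` {y}"
  show "antisym (quot_rel \<delta>)"
  proof (rule antisymI)
    fix X Y assume XY: "(X, Y) \<in> quot_rel \<delta>" "(Y, X) \<in> quot_rel \<delta>"
    then obtain x y where xy: "X = \<delta> `` {x}" "Y = \<delta> `` {y}"
      unfolding quot_rel_def by (auto elim!: quotientE)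
    with XY have "(x, y) \<in> (delta_step \<delta>)\<^sup>*" "(y, x) \<in> (delta_step \<delta>)\<^sup>*"
      using quot_rel_classes_iff[OF assms] by simp_all
    with mutual xy show "X = Y"
      by blast
  qed
qed

lemma cycles_closed_iff:
  "(\<forall>p n. delta_cycle \<delta> p n \<longrightarrow> closed_cycle \<delta> p n) \<longleftrightarrow>
    (\<forall>x y. (x, y) \<in> (delta_step \<delta>)\<^sup>* \<longrightarrow> (y, x) \<in> (delta_step \<delta>)\<^sup>* \<longrightarrow> \<delta> `` {x} = \<delta> `` {y})"
proof
  assume closed: "\<forall>p n. delta_cycle \<delta> p n \<longrightarrow> closed_cycle \<delta> p n"
  show "\<forall>x y. (x, y) \<in> (delta_step \<delta>)\<^sup>* \<longrightarrow> (y, x) \<in> (delta_step \<delta>)\<^sup>* \<longrightarrow> \<delta> `` {x} = \<delta> `` {y}"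
  proof (intro allI impI)
    fix x y assume "(x, y) \<in> (delta_step \<delta>)\<^sup>*" "(y, x) \<in> (delta_step \<delta>)\<^sup>*"
    then obtain p n q m where p: "delta_seq \<delta> p n" "p 0 = x" "p n = y"
      and q: "delta_seq \<delta> q m" "q 0 = y" "q m = x"
      unfolding rtrancl_delta_step_iff by blast
    let ?c = "\<lambda>i. if i \<le> n then p i else q (i - n)"
    have "delta_cycle \<delta> ?c (n + m)"
      using delta_seq_append[OF p(1) q(1)] p q delta_seq_iff[of \<delta> q m]
      by (simp add: delta_cycle_def)
    then have "closed_cycle \<delta> ?c (n + m)"
      using closed by blast
    then have "\<delta> `` {?c n} = \<delta> `` {?c 0}"
      unfolding closed_cycle_def by (metis atLeastAtMost_iff le0 le_add1)
    then show "\<delta> `` {x} = \<delta> `` {y}"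
      using p by simp
  qed
next
  assume mutual: "\<forall>x y. (x, y) \<in> (delta_step \<delta>)\<^sup>* \<longrightarrow> (y, x) \<in> (delta_step \<delta>)\<^sup>* \<longrightarrow>
                    \<delta> `` {x} = \<delta> `` {y}"
  show "\<forall>p n. delta_cycle \<delta> p n \<longrightarrow> closed_cycle \<delta> p n"
    unfolding delta_cycle_def closed_cycle_def
  proof (intro allI impI ballI)
    fix p n i assume cycle: "delta_seq \<delta> p n \<and> p 0 = p n" and "i \<in> {0..n}"
    then have "(p 0, p i) \<in> (delta_step \<delta>)\<^sup>*" "(p i, p n) \<in> (delta_step \<delta>)\<^sup>*"
      using delta_seq_imp_rtrancl[of \<delta> p n 0 i] delta_seq_imp_rtrancl[of \<delta> p n i n] by simp_all
    then have "(p 0, p i) \<in> (delta_step \<delta>)\<^sup>*" "(p i, p 0) \<in> (delta_step \<delta>)\<^sup>*"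
      using cycle by simp_all
    then show "\<delta> `` {p i} = \<delta> `` {p 0}"
      using mutual by metis
  qed
qed

theorem theorem4p7:
  fixes \<delta> :: "('a::lattice) rel"
  assumes "local_congruence \<delta>"
  shows "partial_order_on (UNIV // \<delta>) (quot_rel \<delta>) \<longleftrightarrow>
         (\<forall>p n. delta_cycle \<delta> p n \<longrightarrow> closed_cycle \<delta> p n)"
proof -
  have equiv: "equiv UNIV \<delta>"
    using assms unfolding local_congruence_def by simp
  have "partial_order_on (UNIV // \<delta>) (quot_rel \<delta>) \<longleftrightarrow> antisym (quot_rel \<delta>)"
    using preorder_on_quot_rel[OF equiv] unfolding partial_order_on_def by blast
  also have "\<dots> \<longleftrightarrow> (\<forall>x y. (x, y) \<in> (delta_step \<delta>)\<^sup>* \<longrightarrow> (y, x) \<in> (delta_step \<delta>)\<^sup>* \<longrightarrow>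
      \<delta> `` {x} = \<delta> `` {y})"
    by (rule antisym_quot_rel_iff[OF equiv])
  also have "\<dots> \<longleftrightarrow> (\<forall>p n. delta_cycle \<delta> p n \<longrightarrow> closed_cycle \<delta> p n)"
    by (rule cycles_closed_iff[symmetric])
  finally show ?thesis .
qed

end
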